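(* Fix a scalar $\theta$ and $h,g\in\mathcal{F}$. Assume there exist $\mu_h,\mu_g\in\mathcal{F}$ such that for every bounded $\gamma:\mathcal{A}\times\mathcal{X}\to\mathbb{R}$, $$\tfrac{d}{d\tau}\mathbb{E}[m(a,x;\theta,h+\tau\gamma,g)]\big|_{\tau=0}=\mathbb{E}[\mu_h(a,x)\gamma(a,x)],\qquad \tfrac{d}{d\tau}\mathbb{E}[m(a,x;\theta,h,g+\tau\gamma)]\big|_{\tau=0}=\mathbb{E}[\mu_g(a,x)\gamma(a,x)].$$ Let $\lambda_h,\lambda_g\in\mathcal{F}$ be the unique fixed points of $\Gamma^\dagger_h[f](a,x):=-\mu_h(a,x)+\beta\mathbb{E}[f(a^-,x^-)\mid a,x]$ and $\Gamma^\dagger_g[f](a,x):=-\mu_g(a,x)+\beta\mathbb{E}[f(a^-,x^-)\mid a,x]$ respectively, and define $$\zeta(a,x;\theta,h,g):=m(a,x;\theta,h,g)-\lambda_h(a,x)\{z(a,x)+\beta h(a',x')-h(a,x)\}-\lambda_g(a,x)\{e(a',x')+\beta g(a',x')-g(a,x)\}.$$ Then for every bounded $\gamma$, $$\tfrac{d}{d\tau}\mathbb{E}[\zeta(a,x;\theta,h+\tau\gamma,g)]\big|_{\tau=0}=0\quad\text{and}\quad\tfrac{d}{d\tau}\mathbb{E}[\zeta(a,x;\theta,h,g+\tau\gamma)]\big|_{\tau=0}=0.$$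
   Context: $\mathcal{A}$ is a finite action set, $\mathcal{X}$ a state space, $\beta\in(0,1)$. $(a,x,a',x')$ has joint law $\mathbb{P}$ (expectation $\mathbb{E}$), $(a',x')$ being the pair one period after $(a,x)$; stationarity holds, and $(a^-,x^-)$ denotes the pair one period before $(a,x)$, so that $(a^-,x^-,a,x)$ has the same joint law as $(a,x,a',x')$. $\mathcal{F}$ is the space of square-integrable functions on $\mathcal{A}\times\mathcal{X}$ under the law of $(a,x)$. $z:\mathcal{A}\times\mathcal{X}\to\mathbb{R}$ is bounded and $e:\mathcal{A}\times\mathcal{X}\to\mathbb{R}$ is bounded (in the paper $e(a,x)=\gamma_{\rm Euler}-\ln\mathbb{P}(a\mid x)$). For functions $h,g$, $m(a,x;\theta,h,g):=\partial_\theta\ln\pi_{\theta,h,g}(a,x)$ with $\pi_{\theta,h,g}(a,x):=\exp\{h(a,x)\theta+g(a,x)\}/\sum_{\breve a\in\mathcal{A}}\exp\{h(\breve a,x)\theta+g(\breve a,x)\}$. *)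

theory Defs
  imports "HOL-Probability.Probability"
begin

definition stateM :: "'x measure \<Rightarrow> ('a::finite \<times> 'x) measure" where
  "stateM X = count_space UNIV \<Otimes>\<^sub>M X"

definition inF :: "('a \<times> 'x) measure \<Rightarrow> ('a \<times> 'x \<Rightarrow> real) \<Rightarrow> bool" where
  "inF P0 f \<longleftrightarrow> f \<in> borel_measurable P0 \<and> integrable P0 (\<lambda>s. (f s)^2)"

definition ccp :: "real \<Rightarrow> ('a::finite \<times> 'x \<Rightarrow> real) \<Rightarrow> ('a \<times> 'x \<Rightarrow> real) \<Rightarrow> 'a \<times> 'x \<Rightarrow> real" where
  "ccp \<theta> h g s = exp (h s * \<theta> + g s) /
     (\<Sum>b\<in>UNIV. exp (h (b, snd s) * \<theta> + g (b, snd s)))"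

definition mfun :: "real \<Rightarrow> ('a::finite \<times> 'x \<Rightarrow> real) \<Rightarrow> ('a \<times> 'x \<Rightarrow> real) \<Rightarrow> 'a \<times> 'x \<Rightarrow> real" where
  "mfun \<theta> h g s = deriv (\<lambda>t. ln (ccp t h g s)) \<theta>"

text \<open>zeta evaluated at an outcome w = ((a,x),(a',x')).\<close>
definition zeta :: "('a \<times> 'x \<Rightarrow> real) \<Rightarrow> ('a \<times> 'x \<Rightarrow> real) \<Rightarrow> ('a \<times> 'x \<Rightarrow> real)
     \<Rightarrow> ('a \<times> 'x \<Rightarrow> real) \<Rightarrow> real \<Rightarrow> real \<Rightarrow> ('a \<times> 'x \<Rightarrow> real) \<Rightarrow> ('a::finite \<times> 'x \<Rightarrow> real)
     \<Rightarrow> ('a \<times> 'x) \<times> ('a \<times> 'x) \<Rightarrow> real" where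
  "zeta lh lg z e \<beta> \<theta> h g w =
     mfun \<theta> h g (fst w)
     - lh (fst w) * (z (fst w) + \<beta> * h (snd w) - h (fst w))
     - lg (fst w) * (e (snd w) + \<beta> * g (snd w) - g (fst w))"

end

theory Submission
  imports Defs
begin

text \<open>
  Perturbing h (or g) in direction \<gamma> changes the mean of the Bellman term
  \<lambda>(a,x) {z(a,x) + \<beta> h(a',x') - h(a,x)} linearly, with slope
  E[\<lambda>(a,x) {\<beta> \<gamma>(a',x') - \<gamma>(a,x)}]. Integrating the fixed-point equation
  \<lambda> = -\<mu> + \<beta> E[\<lambda>(a^-,x^-) | a,x] against \<gamma>(a,x) and using stationarity to shift
  the lagged pair (a^-,x^-,a,x) to (a,x,a',x') shows that this slope equals
  E[\<mu>(a,x) \<gamma>(a,x)], the derivative of the mean of m. The two cancel.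
\<close>

lemma integrable_mult_if_square_integrable:
  fixes f k :: "'b \<Rightarrow> real"
  assumes [measurable]: "f \<in> borel_measurable M" "k \<in> borel_measurable M"
    and "integrable M (\<lambda>w. (f w)\<^sup>2)" "integrable M (\<lambda>w. (k w)\<^sup>2)"
  shows "integrable M (\<lambda>w. f w * k w)"
proof (rule Bochner_Integration.integrable_bound)
  show "integrable M (\<lambda>w. (f w)\<^sup>2 + (k w)\<^sup>2)" using assms by simp
  show "AE w in M. norm (f w * k w) \<le> norm ((f w)\<^sup>2 + (k w)\<^sup>2)"
  proof (rule AE_I2)
    fix w
    have "2 * \<bar>f w\<bar> * \<bar>k w\<bar> \<le> (f w)\<^sup>2 + (k w)\<^sup>2"
      using sum_squares_bound[of "\<bar>f w\<bar>" "\<bar>k w\<bar>"] by simp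
    moreover have "0 \<le> \<bar>f w\<bar> * \<bar>k w\<bar>" by simp
    moreover have "norm (f w * k w) = \<bar>f w\<bar> * \<bar>k w\<bar>" by (simp add: abs_mult)
    moreover have "norm ((f w)\<^sup>2 + (k w)\<^sup>2) = (f w)\<^sup>2 + (k w)\<^sup>2" by simp
    ultimately show "norm (f w * k w) \<le> norm ((f w)\<^sup>2 + (k w)\<^sup>2)" by linarith
  qed
qed measurable

lemma DERIV_zero_if_eventually_minus_tangent:
  fixes A F :: "real \<Rightarrow> real"
  assumes "(A has_real_derivative D) (at 0)"
    and "\<forall>\<^sub>F \<tau> in nhds 0. F \<tau> = A \<tau> - (c + \<tau> * D)"
  shows "(F has_real_derivative 0) (at 0)"
proof -
  have "((\<lambda>\<tau>. A \<tau> - (c + \<tau> * D)) has_real_derivative D - (0 + 1 * D)) (at 0)"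
    by (intro derivative_intros assms(1)) (rule DERIV_cmult_right[OF DERIV_ident])
  then show ?thesis
    using DERIV_cong_ev[OF refl assms(2), of _ 0] by simp
qed

definition weighted_residual ::
    "('s \<Rightarrow> real) \<Rightarrow> ('s \<times> 's \<Rightarrow> real) \<Rightarrow> real \<Rightarrow> ('s \<Rightarrow> real) \<Rightarrow> 's \<times> 's \<Rightarrow> real" where
  "weighted_residual lam c \<beta> f w = lam (fst w) * (c w + \<beta> * f (snd w) - f (fst w))"

lemma zeta_eq_weighted_residuals:
  "zeta lh lg z e \<beta> \<theta> h g = (\<lambda>w. mfun \<theta> h g (fst w)
     - weighted_residual lh (z \<circ> fst) \<beta> h w - weighted_residual lg (e \<circ> snd) \<beta> g w)"
  by (simp add: fun_eq_iff zeta_def weighted_residual_def)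

lemma weighted_residual_perturb:
  "weighted_residual lam c \<beta> (\<lambda>s. f s + \<tau> * \<gamma> s) w
     = weighted_residual lam c \<beta> f w + \<tau> * (lam (fst w) * (\<beta> * \<gamma> (snd w) - \<gamma> (fst w)))"
  by (simp add: weighted_residual_def algebra_simps)

locale stationary_transition =
  fixes M :: "(('a \<times> 'x) \<times> ('a \<times> 'x)) measure" and S :: "('a \<times> 'x) measure"
  assumes prob: "prob_space M"
    and fst_measurable [measurable]: "fst \<in> measurable M S"
    and snd_measurable [measurable]: "snd \<in> measurable M S"
    and stationary: "distr M S fst = distr M S snd"
begin

interpretation prob_space M by (rule prob)

abbreviation P0 :: "('a \<times> 'x) measure" where "P0 \<equiv> distr M S fst"

lemma inF_measurable: "inF P0 f \<Longrightarrow> f \<in> borel_measurable S"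
  by (simp add: inF_def)

lemma square_integrable_fst:
  assumes "inF P0 f" shows "integrable M (\<lambda>w. (f (fst w))\<^sup>2)"
proof -
  have [measurable]: "f \<in> borel_measurable S" using assms by (rule inF_measurable)
  show ?thesis
    using assms integrable_distr_eq[OF fst_measurable, of "\<lambda>s. (f s)\<^sup>2"] by (simp add: inF_def)
qed

lemma square_integrable_snd:
  assumes "inF P0 f" shows "integrable M (\<lambda>w. (f (snd w))\<^sup>2)"
proof -
  have [measurable]: "f \<in> borel_measurable S" using assms by (rule inF_measurable)
  show ?thesis
    using assms integrable_distr_eq[OF snd_measurable, of "\<lambda>s. (f s)\<^sup>2"] stationary
    by (simp add: inF_def)
qed

lemma inF_if_bounded:
  assumes f: "f \<in> borel_measurable S" and "bounded (range f)"
  shows "inF P0 f"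
proof -
  obtain B where B: "\<And>s. \<bar>f s\<bar> \<le> B" using assms(2) unfolding bounded_iff by auto
  interpret P0: prob_space P0 by (rule prob_space_distr[OF fst_measurable])
  have "integrable P0 (\<lambda>s. (f s)\<^sup>2)"
  proof (rule P0.integrable_const_bound[where B = "B\<^sup>2"])
    have "(f s)\<^sup>2 \<le> B\<^sup>2" for s
      using power_mono[OF B abs_ge_zero, of s 2] by simp
    then show "AE s in P0. norm ((f s)\<^sup>2) \<le> B\<^sup>2" by simp
  qed (use f in simp)
  then show ?thesis using f by (simp add: inF_def)
qed

lemma integrable_lag_products:
  assumes f: "inF P0 f" and k: "inF P0 k"
  shows "integrable M (\<lambda>w. f (fst w) * k (fst w))"
    and "integrable M (\<lambda>w. f (fst w) * k (snd w))"
    and "integrable M (\<lambda>w. f (snd w) * k (snd w))"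
  using inF_measurable[OF f] inF_measurable[OF k]
  by (auto intro!: integrable_mult_if_square_integrable
      simp: square_integrable_fst[OF f] square_integrable_fst[OF k]
            square_integrable_snd[OF f] square_integrable_snd[OF k])

lemma integral_snd_eq_integral_fst:
  fixes f :: "'a \<times> 'x \<Rightarrow> real"
  shows "f \<in> borel_measurable S \<Longrightarrow> (\<integral>w. f (snd w) \<partial>M) = (\<integral>w. f (fst w) \<partial>M)"
  using integral_distr[OF fst_measurable, of f] integral_distr[OF snd_measurable, of f] stationary
  by simp

lemma sigma_finite_subalgebra_snd:
  "sigma_finite_subalgebra M (vimage_algebra (space M) snd S)"
proof -
  have snd_space: "snd \<in> space M \<rightarrow> space S" by (auto intro: measurable_space[OF snd_measurable])
  have "subalgebra M (vimage_algebra (space M) snd S)"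
    unfolding subalgebra_def
    using sets_vimage_algebra2[OF snd_space] measurable_sets[OF snd_measurable] by auto
  then show ?thesis
    by (intro finite_measure_subalgebra_is_sigma_finite)
      (simp add: finite_measure_subalgebra_def finite_measure_subalgebra_axioms_def finite_measure_axioms)
qed

lemma integral_fixed_point_adjoint:
  assumes lam: "inF P0 lam" and mu: "inF P0 mu" and \<gamma>: "inF P0 \<gamma>"
    and fixed: "AE w in M. lam (snd w) = - mu (snd w)
        + \<beta> * real_cond_exp M (vimage_algebra (space M) snd S) (\<lambda>v. lam (fst v)) w"
  shows "(\<integral>w. mu (fst w) * \<gamma> (fst w) \<partial>M)
    = (\<integral>w. lam (fst w) * (\<beta> * \<gamma> (snd w) - \<gamma> (fst w)) \<partial>M)"
proof -
  define F where "F = vimage_algebra (space M) snd S"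
  define r where "r = real_cond_exp M F (\<lambda>v. lam (fst v))"
  interpret sigma_finite_subalgebra M F
    unfolding F_def by (rule sigma_finite_subalgebra_snd)
  have [measurable]: "lam \<in> borel_measurable S" "mu \<in> borel_measurable S" "\<gamma> \<in> borel_measurable S"
    using lam mu \<gamma> by (simp_all add: inF_measurable)
  have r_measurable [measurable]: "r \<in> borel_measurable M"
    unfolding r_def by (rule borel_measurable_cond_exp2)
  have \<gamma>_snd_F: "(\<lambda>w. \<gamma> (snd w)) \<in> borel_measurable F"
    unfolding F_def
    by (rule measurable_compose[OF measurable_vimage_algebra1])
      (auto intro: measurable_space[OF snd_measurable])
  have lam\<gamma>: "integrable M (\<lambda>w. lam (fst w) * \<gamma> (snd w))"
    "integrable M (\<lambda>w. lam (fst w) * \<gamma> (fst w))"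
    "integrable M (\<lambda>w. lam (snd w) * \<gamma> (snd w))"
    using integrable_lag_products[OF lam \<gamma>] by simp_all
  have mu\<gamma>: "integrable M (\<lambda>w. mu (snd w) * \<gamma> (snd w))"
    using integrable_lag_products[OF mu \<gamma>] by simp
  \<comment> \<open>\<gamma>(a,x) is measurable w.r.t. the conditioning \<sigma>-algebra, so the conditional expectation drops out.\<close>
  have "\<beta> * (\<integral>w. lam (fst w) * \<gamma> (snd w) \<partial>M) = (\<integral>w. \<beta> * (\<gamma> (snd w) * r w) \<partial>M)"
    using real_cond_exp_intg(2)[OF _ \<gamma>_snd_F, of "\<lambda>w. lam (fst w)"] lam\<gamma>(1)
    unfolding r_def by (simp add: mult.commute)
  also have "\<dots> = (\<integral>w. lam (snd w) * \<gamma> (snd w) + mu (snd w) * \<gamma> (snd w) \<partial>M)"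
  proof (rule integral_cong_AE)
    show "AE w in M. \<beta> * (\<gamma> (snd w) * r w) = lam (snd w) * \<gamma> (snd w) + mu (snd w) * \<gamma> (snd w)"
      using fixed[folded F_def, folded r_def]
    proof eventually_elim
      case (elim w)
      then have "\<beta> * (\<gamma> (snd w) * r w) = (lam (snd w) + mu (snd w)) * \<gamma> (snd w)"
        by (simp add: algebra_simps)
      then show ?case by (simp add: distrib_right)
    qed
  qed measurable
  also have "\<dots> = (\<integral>w. lam (fst w) * \<gamma> (fst w) \<partial>M) + (\<integral>w. mu (fst w) * \<gamma> (fst w) \<partial>M)"
    using lam\<gamma>(3) mu\<gamma>
    by (simp add: integral_snd_eq_integral_fst[of "\<lambda>s. lam s * \<gamma> s"]
        integral_snd_eq_integral_fst[of "\<lambda>s. mu s * \<gamma> s"])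
  moreover have "(\<integral>w. lam (fst w) * (\<beta> * \<gamma> (snd w) - \<gamma> (fst w)) \<partial>M)
      = \<beta> * (\<integral>w. lam (fst w) * \<gamma> (snd w) \<partial>M) - (\<integral>w. lam (fst w) * \<gamma> (fst w) \<partial>M)"
    using lam\<gamma>(1,2) by (simp add: right_diff_distrib mult.left_commute)
  ultimately show ?thesis by simp
qed

lemma integrable_weighted_residual:
  assumes lam: "inF P0 lam" and f: "inF P0 f"
    and c [measurable]: "c \<in> borel_measurable M" and c2: "integrable M (\<lambda>w. (c w)\<^sup>2)"
  shows "integrable M (weighted_residual lam c \<beta> f)"
proof -
  have [measurable]: "lam \<in> borel_measurable S" using lam by (rule inF_measurable)
  have "integrable M (\<lambda>w. lam (fst w) * c w)"
    using c2 square_integrable_fst[OF lam] by (intro integrable_mult_if_square_integrable) auto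
  then show ?thesis
    using integrable_lag_products[OF lam f]
    unfolding weighted_residual_def right_diff_distrib distrib_left
    by (intro Bochner_Integration.integrable_diff Bochner_Integration.integrable_add) (auto simp: mult.left_commute)
qed

lemma DERIV_moment_minus_weighted_residual:
  fixes m :: "real \<Rightarrow> ('a \<times> 'x) \<times> ('a \<times> 'x) \<Rightarrow> real" and c R :: "('a \<times> 'x) \<times> ('a \<times> 'x) \<Rightarrow> real"
  assumes lam: "inF P0 lam" and mu: "inF P0 mu" and f: "inF P0 f" and \<gamma>: "inF P0 \<gamma>"
    and fixed: "AE w in M. lam (snd w) = - mu (snd w)
        + \<beta> * real_cond_exp M (vimage_algebra (space M) snd S) (\<lambda>v. lam (fst v)) w"
    and c: "c \<in> borel_measurable M" "integrable M (\<lambda>w. (c w)\<^sup>2)"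
    and R: "integrable M R"
    and m_integrable: "\<forall>\<^sub>F \<tau> in nhds 0. integrable M (m \<tau>)"
    and m_deriv: "((\<lambda>\<tau>. integral\<^sup>L M (m \<tau>)) has_real_derivative (\<integral>w. mu (fst w) * \<gamma> (fst w) \<partial>M)) (at 0)"
  shows "((\<lambda>\<tau>. \<integral>w. m \<tau> w - weighted_residual lam c \<beta> (\<lambda>s. f s + \<tau> * \<gamma> s) w - R w \<partial>M)
    has_real_derivative 0) (at 0)"
proof (rule DERIV_zero_if_eventually_minus_tangent[OF m_deriv])
  define Q where "Q w = lam (fst w) * (\<beta> * \<gamma> (snd w) - \<gamma> (fst w))" for w
  have Q: "integrable M Q"
    using integrable_lag_products[OF lam \<gamma>]
    unfolding Q_def right_diff_distrib by (auto simp: mult.left_commute)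
  have res: "integrable M (weighted_residual lam c \<beta> f)"
    using integrable_weighted_residual[OF lam f c] .
  show "\<forall>\<^sub>F \<tau> in nhds 0. (\<integral>w. m \<tau> w - weighted_residual lam c \<beta> (\<lambda>s. f s + \<tau> * \<gamma> s) w - R w \<partial>M)
    = integral\<^sup>L M (m \<tau>) - ((integral\<^sup>L M (weighted_residual lam c \<beta> f) + integral\<^sup>L M R)
      + \<tau> * (\<integral>w. mu (fst w) * \<gamma> (fst w) \<partial>M))"
    using m_integrable
  proof eventually_elim
    case (elim \<tau>)
    have "(\<integral>w. m \<tau> w - weighted_residual lam c \<beta> (\<lambda>s. f s + \<tau> * \<gamma> s) w - R w \<partial>M)
      = (\<integral>w. m \<tau> w - (weighted_residual lam c \<beta> f w + \<tau> * Q w) - R w \<partial>M)"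
      by (simp add: weighted_residual_perturb Q_def)
    also have "\<dots> = integral\<^sup>L M (m \<tau>) - (integral\<^sup>L M (weighted_residual lam c \<beta> f) + \<tau> * integral\<^sup>L M Q)
        - integral\<^sup>L M R"
      using elim Q res R by simp
    finally show ?case
      unfolding Q_def integral_fixed_point_adjoint[OF lam mu \<gamma> fixed, symmetric] by simp
  qed
qed

end

theorem mainTheorem8:
  fixes M :: "(('a::finite \<times> 'x) \<times> ('a \<times> 'x)) measure"
    and X :: "'x measure"
    and \<beta> \<theta> :: real
    and z e h g mu_h mu_g lam_h lam_g :: "'a \<times> 'x \<Rightarrow> real"
  assumes prob: "prob_space M"
    and sets_M: "sets M = sets (stateM X \<Otimes>\<^sub>M stateM X)"
    and stationary: "distr M (stateM X) fst = distr M (stateM X) snd"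
    and beta: "0 < \<beta>" "\<beta> < 1"
    and z_meas: "z \<in> borel_measurable (stateM X)" and z_bdd: "bounded (range z)"
    and e_meas: "e \<in> borel_measurable (stateM X)" and e_bdd: "bounded (range e)"
    and h_F: "inF (distr M (stateM X) fst) h"
    and g_F: "inF (distr M (stateM X) fst) g"
    and muh_F: "inF (distr M (stateM X) fst) mu_h"
    and mug_F: "inF (distr M (stateM X) fst) mu_g"
    and deriv_h: "\<And>\<gamma>. \<gamma> \<in> borel_measurable (stateM X) \<Longrightarrow> bounded (range \<gamma>) \<Longrightarrow>
        (\<forall>\<^sub>F \<tau> in nhds 0. integrable M (\<lambda>w. mfun \<theta> (\<lambda>s. h s + \<tau> * \<gamma> s) g (fst w))) \<and>
        ((\<lambda>\<tau>. integral\<^sup>L M (\<lambda>w. mfun \<theta> (\<lambda>s. h s + \<tau> * \<gamma> s) g (fst w)))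
           has_real_derivative integral\<^sup>L M (\<lambda>w. mu_h (fst w) * \<gamma> (fst w))) (at 0)"
    and deriv_g: "\<And>\<gamma>. \<gamma> \<in> borel_measurable (stateM X) \<Longrightarrow> bounded (range \<gamma>) \<Longrightarrow>
        (\<forall>\<^sub>F \<tau> in nhds 0. integrable M (\<lambda>w. mfun \<theta> h (\<lambda>s. g s + \<tau> * \<gamma> s) (fst w))) \<and>
        ((\<lambda>\<tau>. integral\<^sup>L M (\<lambda>w. mfun \<theta> h (\<lambda>s. g s + \<tau> * \<gamma> s) (fst w)))
           has_real_derivative integral\<^sup>L M (\<lambda>w. mu_g (fst w) * \<gamma> (fst w))) (at 0)"
    and lamh_F: "inF (distr M (stateM X) fst) lam_h"
    and lamg_F: "inF (distr M (stateM X) fst) lam_g"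
    and lamh_fix: "AE w in M. lam_h (snd w) = - mu_h (snd w)
        + \<beta> * real_cond_exp M (vimage_algebra (space M) snd (stateM X)) (\<lambda>v. lam_h (fst v)) w"
    and lamg_fix: "AE w in M. lam_g (snd w) = - mu_g (snd w)
        + \<beta> * real_cond_exp M (vimage_algebra (space M) snd (stateM X)) (\<lambda>v. lam_g (fst v)) w"
  shows "\<forall>\<gamma>. \<gamma> \<in> borel_measurable (stateM X) \<longrightarrow> bounded (range \<gamma>) \<longrightarrow>
      ((\<lambda>\<tau>. integral\<^sup>L M (zeta lam_h lam_g z e \<beta> \<theta> (\<lambda>s. h s + \<tau> * \<gamma> s) g)) has_real_derivative 0) (at 0)
    \<and> ((\<lambda>\<tau>. integral\<^sup>L M (zeta lam_h lam_g z e \<beta> \<theta> h (\<lambda>s. g s + \<tau> * \<gamma> s))) has_real_derivative 0) (at 0)"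
proof (intro allI impI conjI)
  \<comment> \<open>The bounds on \<beta> only matter for the existence and uniqueness of the fixed points,
    which are given here as hypotheses; the argument does not use them.\<close>
  fix \<gamma> :: "'a \<times> 'x \<Rightarrow> real"
  assume \<gamma>_measurable: "\<gamma> \<in> borel_measurable (stateM X)" and \<gamma>_bounded: "bounded (range \<gamma>)"
  have fst_measurable [measurable]: "fst \<in> measurable M (stateM X)"
    by (subst measurable_cong_sets[OF sets_M refl]) (rule measurable_fst)
  have snd_measurable [measurable]: "snd \<in> measurable M (stateM X)"
    by (subst measurable_cong_sets[OF sets_M refl]) (rule measurable_snd)
  interpret stationary_transition M "stateM X"
    using prob fst_measurable snd_measurable stationary by (rule stationary_transition.intro)
  have z_F: "inF P0 z" and e_F: "inF P0 e" and \<gamma>_F: "inF P0 \<gamma>"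
    using inF_if_bounded z_meas z_bdd e_meas e_bdd \<gamma>_measurable \<gamma>_bounded by blast+
  note [measurable] = z_meas e_meas
  have z_fst: "integrable M (\<lambda>w. ((z \<circ> fst) w)\<^sup>2)" and e_snd: "integrable M (\<lambda>w. ((e \<circ> snd) w)\<^sup>2)"
    using square_integrable_fst[OF z_F] square_integrable_snd[OF e_F] by simp_all
  have res_h: "integrable M (weighted_residual lam_h (z \<circ> fst) \<beta> h)"
    by (rule integrable_weighted_residual[OF lamh_F h_F _ z_fst]) measurable
  have res_g: "integrable M (weighted_residual lam_g (e \<circ> snd) \<beta> g)"
    by (rule integrable_weighted_residual[OF lamg_F g_F _ e_snd]) measurable
  show "((\<lambda>\<tau>. integral\<^sup>L M (zeta lam_h lam_g z e \<beta> \<theta> (\<lambda>s. h s + \<tau> * \<gamma> s) g)) has_real_derivative 0) (at 0)"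
    unfolding zeta_eq_weighted_residuals
    using deriv_h[OF \<gamma>_measurable \<gamma>_bounded]
    by (intro DERIV_moment_minus_weighted_residual[OF lamh_F muh_F h_F \<gamma>_F lamh_fix _ z_fst res_g]) auto
  have "zeta lam_h lam_g z e \<beta> \<theta> h (\<lambda>s. g s + \<tau> * \<gamma> s) = (\<lambda>w. mfun \<theta> h (\<lambda>s. g s + \<tau> * \<gamma> s) (fst w)
      - weighted_residual lam_g (e \<circ> snd) \<beta> (\<lambda>s. g s + \<tau> * \<gamma> s) w
      - weighted_residual lam_h (z \<circ> fst) \<beta> h w)" for \<tau>
    unfolding zeta_eq_weighted_residuals by (simp add: fun_eq_iff algebra_simps)
  then show "((\<lambda>\<tau>. integral\<^sup>L M (zeta lam_h lam_g z e \<beta> \<theta> h (\<lambda>s. g s + \<tau> * \<gamma> s))) has_real_derivative 0) (at 0)"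
    using deriv_g[OF \<gamma>_measurable \<gamma>_bounded]
    by (simp only:) (intro DERIV_moment_minus_weighted_residual[OF lamg_F mug_F g_F \<gamma>_F lamg_fix _ e_snd res_h]; auto)
qed

end
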